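(* Let $n,m\ge 1$ be integers, $x_0<x_1<\dots<x_n$, $y_0<y_1<\dots<y_m$ real numbers and $z_{ij}\in\mathbf{R}$ for $0\le i\le n$, $0\le j\le m$. Put $I_{x_i}=[x_{i-1},x_i]$, $I_{y_j}=[y_{j-1},y_j]$, $I_x=[x_0,x_n]$, $I_y=[y_0,y_m]$, $E_{ij}=I_{x_i}\times I_{y_j}$, $E=I_x\times I_y$ and $N_{nm}=\{1,\dots,n\}\times\{1,\dots,m\}$. For $(i,j)\in N_{nm}$ let $L_{x_i}:I_x\to I_{x_i}$ and $L_{y_j}:I_y\to I_{y_j}$ be contraction homeomorphisms mapping the endpoints $\{x_0,x_n\}$ onto $\{x_{i-1},x_i\}$ and $\{y_0,y_m\}$ onto $\{y_{j-1},y_j\}$ respectively, and let $L_{ij}(x,y)=(L_{x_i}(x),L_{y_j}(y))$, $L_{ij}:E\to E_{ij}$. Let $q_\alpha:\{x_\alpha\}\times I_y\to\mathbf{R}$ ($\alpha=0,\dots,n$) be continuous functions with $q_\alpha(x_\alpha,y_l)=z_{\alpha l}$ for $l=0,\dots,m$, and $r_\beta:I_x\times\{y_\beta\}\to\mathbf{R}$ ($\beta=0,\dots,m$) be continuous functions with $r_\beta(x_k,y_\beta)=z_{k\beta}$ for $k=0,\dots,n$. For each $(i,j)\in N_{nm}$ let: - $s_{ij}:E_{ij}\to\mathbf{R}$ be a Lipschitz function with $|s_{ij}(x,y)|<1$ on $E_{ij}$ and $s_{ij}(x_{i-1},y)=s_{ij}(x_i,y)=0$ for $y\in I_{y_j}$,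 $s_{ij}(x,y_{j-1})=s_{ij}(x,y_j)=0$ for $x\in I_{x_i}$; - $g_{ij}:E\to\mathbf{R}$ be any Lipschitz function; - $h_{ij}:E_{ij}\to\mathbf{R}$ be a Lipschitz function with $h_{ij}=q_{i-1}$ on $\{x_{i-1}\}\times I_{y_j}$, $h_{ij}=q_i$ on $\{x_i\}\times I_{y_j}$, $h_{ij}=r_{j-1}$ on $I_{x_i}\times\{y_{j-1}\}$, $h_{ij}=r_j$ on $I_{x_i}\times\{y_j\}$; - $Q_{ij}(x,y)=-s_{ij}(L_{ij}(x,y))\,g_{ij}(x,y)+h_{ij}(L_{ij}(x,y))$ for $(x,y)\in E$; - $F_{ij}(x,y,z)=s_{ij}(L_{ij}(x,y))\,z+Q_{ij}(x,y)$ and $W_{ij}(x,y,z)=(L_{ij}(x,y),F_{ij}(x,y,z))$ for $(x,y,z)\in E\times\mathbf{R}$. Then the attractor $A$ of the iterated function system $\{W_{ij}:(i,j)\in N_{nm}\}$ is the graph of a continuous function $f:E\to\mathbf{R}$.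
   Context: The maps $W_{ij}$ are contractions with respect to the metric $\rho_\theta((x,y,z),(x',y',z'))=|x-x'|+|y-y'|+\theta|z-z'|$ on $\mathbf{R}^3$ for a suitable small $\theta>0$ (equivalent to the Euclidean metric). The attractor of the IFS is the unique nonempty compact set $A\subset E\times\mathbf{R}$ with $A=\bigcup_{(i,j)\in N_{nm}}W_{ij}(A)$. The graph of $f$ is $\{(x,y,f(x,y)):(x,y)\in E\}$. *)

theory Defs
  imports "HOL-Analysis.Analysis"
begin

definition contraction_on :: "real set \<Rightarrow> (real \<Rightarrow> real) \<Rightarrow> bool" where
  "contraction_on S f \<longleftrightarrow> (\<exists>c<1. c-lipschitz_on S f)"

definition Lmap :: "(nat \<Rightarrow> real \<Rightarrow> real) \<Rightarrow> (nat \<Rightarrow> real \<Rightarrow> real) \<Rightarrow> nat \<Rightarrow> nat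
    \<Rightarrow> real \<times> real \<Rightarrow> real \<times> real" where
  "Lmap Lx Ly i j p = (Lx i (fst p), Ly j (snd p))"

definition Qmap :: "(nat \<Rightarrow> nat \<Rightarrow> real \<times> real \<Rightarrow> real) \<Rightarrow> (nat \<Rightarrow> nat \<Rightarrow> real \<times> real \<Rightarrow> real)
    \<Rightarrow> (nat \<Rightarrow> nat \<Rightarrow> real \<times> real \<Rightarrow> real)
    \<Rightarrow> (nat \<Rightarrow> real \<Rightarrow> real) \<Rightarrow> (nat \<Rightarrow> real \<Rightarrow> real) \<Rightarrow> nat \<Rightarrow> nat \<Rightarrow> real \<times> real \<Rightarrow> real" where
  "Qmap s g h Lx Ly i j p = - s i j (Lmap Lx Ly i j p) * g i j p + h i j (Lmap Lx Ly i j p)"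

definition Fmap :: "(nat \<Rightarrow> nat \<Rightarrow> real \<times> real \<Rightarrow> real) \<Rightarrow> (nat \<Rightarrow> nat \<Rightarrow> real \<times> real \<Rightarrow> real)
    \<Rightarrow> (nat \<Rightarrow> nat \<Rightarrow> real \<times> real \<Rightarrow> real)
    \<Rightarrow> (nat \<Rightarrow> real \<Rightarrow> real) \<Rightarrow> (nat \<Rightarrow> real \<Rightarrow> real) \<Rightarrow> nat \<Rightarrow> nat \<Rightarrow> real \<times> real \<times> real \<Rightarrow> real" where
  "Fmap s g h Lx Ly i j v = s i j (Lmap Lx Ly i j (fst v, fst (snd v))) * snd (snd v)
      + Qmap s g h Lx Ly i j (fst v, fst (snd v))"

definition Wmap :: "(nat \<Rightarrow> nat \<Rightarrow> real \<times> real \<Rightarrow> real) \<Rightarrow> (nat \<Rightarrow> nat \<Rightarrow> real \<times> real \<Rightarrow> real)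
    \<Rightarrow> (nat \<Rightarrow> nat \<Rightarrow> real \<times> real \<Rightarrow> real)
    \<Rightarrow> (nat \<Rightarrow> real \<Rightarrow> real) \<Rightarrow> (nat \<Rightarrow> real \<Rightarrow> real) \<Rightarrow> nat \<Rightarrow> nat \<Rightarrow> real \<times> real \<times> real
    \<Rightarrow> real \<times> real \<times> real" where
  "Wmap s g h Lx Ly i j v = (Lx i (fst v), Ly j (fst (snd v)), Fmap s g h Lx Ly i j v)"

definition is_attractor :: "(real \<times> real) set \<Rightarrow> (nat \<times> nat) set
    \<Rightarrow> (nat \<Rightarrow> nat \<Rightarrow> real \<times> real \<times> real \<Rightarrow> real \<times> real \<times> real) \<Rightarrow> (real \<times> real \<times> real) set \<Rightarrow> bool" where
  "is_attractor E N W A \<longleftrightarrow> A \<noteq> {} \<and> compact A \<and> A \<subseteq> {(a, b, c). (a, b) \<in> E}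
     \<and> A = (\<Union>(i, j)\<in>N. W i j ` A)"

definition graph_of :: "(real \<times> real) set \<Rightarrow> (real \<times> real \<Rightarrow> real) \<Rightarrow> (real \<times> real \<times> real) set" where
  "graph_of E f = {(a, b, f (a, b)) | a b. (a, b) \<in> E}"

end

theory Submission
  imports Defs
begin

text \<open>
  Gluing the maps \<open>W\<^sub>i\<^sub>j\<close> over the cells \<open>E\<^sub>i\<^sub>j\<close> gives the Read-Bajraktarevic operator
  \<open>(T f)(L\<^sub>i\<^sub>j p) = s\<^sub>i\<^sub>j(L\<^sub>i\<^sub>j p) (f p - g\<^sub>i\<^sub>j p) + h\<^sub>i\<^sub>j(L\<^sub>i\<^sub>j p)\<close> on continuous functions on \<open>E\<close>.
  Since \<open>s\<^sub>i\<^sub>j\<close> vanishes and \<open>h\<^sub>i\<^sub>j\<close> takes prescribed values on the edges of \<open>E\<^sub>i\<^sub>j\<close>, the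
  pieces agree where cells meet, so \<open>T f\<close> is continuous; since \<open>max \<bar>s\<^sub>i\<^sub>j\<bar> < 1\<close>, \<open>T\<close> is a
  contraction for the sup norm, and the graph of its fixed point \<open>f\<close> is invariant.
  Conversely, on an attractor \<open>A\<close> the vertical deviation \<open>\<bar>z - f(x,y)\<bar>\<close> is multiplied by
  \<open>\<bar>s\<^sub>i\<^sub>j\<bar>\<close> under \<open>W\<^sub>i\<^sub>j\<close>, so its maximum over \<open>A\<close> is \<open>0\<close>; and the distance from a point of
  \<open>E\<close> to the shadow of \<open>A\<close> on \<open>E\<close> is at most \<open>C < 1\<close> times that distance at its preimage
  under some \<open>L\<^sub>i\<^sub>j\<close>, so the shadow is all of \<open>E\<close>. Hence \<open>A\<close> is the graph of \<open>f\<close>.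
\<close>

lemma increasing_steps_less:
  fixes u :: "nat \<Rightarrow> 'a::linorder"
  assumes inc: "\<And>i. i < k \<Longrightarrow> u i < u (Suc i)" and "i < j" "j \<le> k"
  shows "u i < u j"
  using assms(2,3)
proof (induction j)
  case 0
  then show ?case by simp
next
  case (Suc j)
  then show ?case
    using inc[of j] by (cases "i = j") (auto intro: less_trans)
qed

lemma increasing_steps_le:
  fixes u :: "nat \<Rightarrow> 'a::linorder"
  assumes "\<And>i. i < k \<Longrightarrow> u i < u (Suc i)" and "i \<le> j" "j \<le> k"
  shows "u i \<le> u j"
  using increasing_steps_less[where u=u and k=k, OF assms(1), of i j] assms(2,3)
  by (cases "i = j") auto

lemma consecutive_intervals_cover:
  fixes u :: "nat \<Rightarrow> 'a::linorder"
  assumes "1 \<le> k" "u 0 \<le> a" "a \<le> u k"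
  shows "\<exists>i\<in>{1..k}. a \<in> {u (i - 1)..u i}"
  using assms
proof (induction k)
  case 0
  then show ?case by simp
next
  case (Suc k)
  show ?case
  proof (cases "1 \<le> k \<and> a \<le> u k")
    case True
    then show ?thesis using Suc by fastforce
  next
    case False
    then have "u k \<le> a" using Suc.prems by (cases k) auto
    then show ?thesis using Suc.prems by (intro bexI[of _ "Suc k"]) auto
  qed
qed

lemma consecutive_intervals_overlap:
  fixes u :: "nat \<Rightarrow> 'a::linorder"
  assumes inc: "\<And>i. i < k \<Longrightarrow> u i < u (Suc i)"
    and "i \<in> {1..k}" "i' \<in> {1..k}" "i < i'"
    and "a \<in> {u (i - 1)..u i}" "a \<in> {u (i' - 1)..u i'}"
  shows "a = u i \<and> i' = Suc i"
proof -
  have "u i \<le> u (i' - 1)"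
    using increasing_steps_le[where u=u and k=k, OF inc, of i "i' - 1"] assms(3,4) by auto
  then have a: "a = u i" "u i = u (i' - 1)" using assms(5,6) by auto
  moreover have "i' - 1 \<le> k" using assms(3) by auto
  ultimately have "\<not> i < i' - 1"
    using increasing_steps_less[where u=u and k=k, OF inc, of i "i' - 1"] by auto
  with a assms(4) show ?thesis by auto
qed

lemma finite_uniform_constant_less_one:
  fixes P :: "'i \<Rightarrow> real \<Rightarrow> bool"
  assumes "finite I"
    and ex: "\<And>i. i \<in> I \<Longrightarrow> \<exists>c<1. P i c"
    and mono: "\<And>i c c'. P i c \<Longrightarrow> c \<le> c' \<Longrightarrow> P i c'"
  shows "\<exists>c. 0 \<le> c \<and> c < 1 \<and> (\<forall>i\<in>I. P i c)"
proof -
  obtain c where c: "\<And>i. i \<in> I \<Longrightarrow> c i < 1 \<and> P i (c i)" using ex by metis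
  define C where "C = Max (insert 0 (c ` I))"
  have fin: "finite (insert 0 (c ` I))" using assms(1) by simp
  have "C \<in> insert 0 (c ` I)" unfolding C_def using fin by (intro Max_in) auto
  then have "C < 1" using c by auto
  moreover have "0 \<le> C" "\<And>i. i \<in> I \<Longrightarrow> c i \<le> C" unfolding C_def using fin by auto
  ultimately show ?thesis using c mono by blast
qed

lemma compact_abs_bound_less_one:
  fixes f :: "'a::topological_space \<Rightarrow> real"
  assumes "compact K" "continuous_on K f" "\<And>v. v \<in> K \<Longrightarrow> \<bar>f v\<bar> < 1"
  shows "\<exists>c<1. \<forall>v\<in>K. \<bar>f v\<bar> \<le> c"
proof (cases "K = {}")
  case True
  then show ?thesis by (intro exI[of _ 0]) auto
next
  case False
  have "continuous_on K (\<lambda>v. \<bar>f v\<bar>)" using assms(2) by (intro continuous_intros)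
  then obtain w where "w \<in> K" "\<forall>v\<in>K. \<bar>f v\<bar> \<le> \<bar>f w\<bar>"
    using continuous_attains_sup[OF assms(1) False] by blast
  then show ?thesis using assms(3) by blast
qed

lemma lipschitz_on_map_prod:
  assumes f: "C-lipschitz_on A f" and g: "C-lipschitz_on B g"
  shows "C-lipschitz_on (A \<times> B) (\<lambda>p. (f (fst p), g (snd p)))"
proof (rule lipschitz_onI)
  show C: "0 \<le> C" using f by (rule lipschitz_on_nonneg)
  fix p p' assume "p \<in> A \<times> B" "p' \<in> A \<times> B"
  then have "dist (f (fst p)) (f (fst p')) \<le> C * dist (fst p) (fst p')"
    "dist (g (snd p)) (g (snd p')) \<le> C * dist (snd p) (snd p')"
    using f g by (auto intro: lipschitz_onD)
  then have "sqrt ((dist (f (fst p)) (f (fst p')))\<^sup>2 + (dist (g (snd p)) (g (snd p')))\<^sup>2)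
      \<le> sqrt ((C * dist (fst p) (fst p'))\<^sup>2 + (C * dist (snd p) (snd p'))\<^sup>2)"
    by (intro real_sqrt_le_mono add_mono power_mono) auto
  also have "\<dots> = C * sqrt ((dist (fst p) (fst p'))\<^sup>2 + (dist (snd p) (snd p'))\<^sup>2)"
    using C by (simp add: power_mult_distrib ring_distribs[symmetric] real_sqrt_mult)
  finally show "dist (f (fst p), g (snd p)) (f (fst p'), g (snd p')) \<le> C * dist p p'"
    by (cases p, cases p') (simp add: dist_Pair_Pair)
qed

lemma compact_dominated_by_contraction_nonpos:
  fixes \<phi> :: "'a::topological_space \<Rightarrow> real"
  assumes "compact A" "continuous_on A \<phi>" "0 \<le> c" "c < 1"
    and dom: "\<And>t. t \<in> A \<Longrightarrow> \<exists>t'\<in>A. \<phi> t \<le> c * \<phi> t'"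
  shows "\<forall>t\<in>A. \<phi> t \<le> 0"
proof (cases "A = {}")
  case True
  then show ?thesis by simp
next
  case False
  obtain t0 where t0: "t0 \<in> A" "\<forall>t\<in>A. \<phi> t \<le> \<phi> t0"
    using continuous_attains_sup[OF assms(1) False assms(2)] by blast
  obtain t1 where "t1 \<in> A" "\<phi> t0 \<le> c * \<phi> t1" using dom[OF t0(1)] by blast
  then have "\<phi> t0 \<le> c * \<phi> t0" using t0(2) assms(3) by (meson mult_left_mono order_trans)
  then have "\<phi> t0 \<le> 0" using assms(4) by (smt (verit) mult_le_cancel_right1)
  then show ?thesis using t0(2) by fastforce
qed

text \<open>The nearest-point retraction onto \<open>E\<close> lets bounded continuous functions on the whole
  space stand in for continuous functions on \<open>E\<close>, so that Banach's fixed point theorem applies.\<close>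

lemma continuous_fixed_point_of_contraction:
  fixes G :: "('a::euclidean_space \<Rightarrow> 'b::complete_space) \<Rightarrow> 'a \<Rightarrow> 'b"
  assumes E: "compact E" "convex E" "E \<noteq> {}"
    and G_cont: "\<And>f. continuous_on UNIV f \<Longrightarrow> continuous_on E (G f)"
    and G_contr: "\<And>f f' v. v \<in> E \<Longrightarrow> \<exists>w. dist (G f v) (G f' v) \<le> c * dist (f w) (f' w)"
    and c: "0 \<le> c" "c < 1"
  shows "\<exists>F. continuous_on UNIV F \<and> (\<forall>v\<in>E. G F v = F v)"
proof -
  let ?\<rho> = "closest_point E"
  have \<rho>_cont: "continuous_on UNIV ?\<rho>"
    using E by (intro continuous_on_closest_point) (auto intro: compact_imp_closed)
  have \<rho>_in: "?\<rho> v \<in> E" for v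
    using E by (intro closest_point_in_set) (auto intro: compact_imp_closed)
  have T_mem: "(\<lambda>v. G (apply_bcontfun f) (?\<rho> v)) \<in> bcontfun" for f
  proof -
    have cG: "continuous_on E (G (apply_bcontfun f))" by (rule G_cont) simp
    have "continuous_on UNIV (\<lambda>v. G (apply_bcontfun f) (?\<rho> v))"
      by (rule continuous_on_compose2[OF cG \<rho>_cont]) (use \<rho>_in in auto)
    moreover have "bounded (G (apply_bcontfun f) ` E)"
      by (intro compact_imp_bounded compact_continuous_image cG E(1))
    then have "bounded (range (\<lambda>v. G (apply_bcontfun f) (?\<rho> v)))"
      by (rule bounded_subset) (use \<rho>_in in auto)
    ultimately show ?thesis unfolding bcontfun_def by simp
  qed
  define T where "T f = Bcontfun (\<lambda>v. G (apply_bcontfun f) (?\<rho> v))" for f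
  have T_apply: "apply_bcontfun (T f) v = G (apply_bcontfun f) (?\<rho> v)" for f v
    unfolding T_def using T_mem by (simp add: Bcontfun_inverse)
  have "dist (T f) (T f') \<le> c * dist f f'" for f f'
  proof (rule dist_bound)
    fix v
    obtain w where "dist (T f v) (T f' v) \<le> c * dist (f w) (f' w)"
      using G_contr[OF \<rho>_in] unfolding T_apply by blast
    also have "\<dots> \<le> c * dist f f'" using c(1) by (intro mult_left_mono dist_bounded)
    finally show "dist (T f v) (T f' v) \<le> c * dist f f'" .
  qed
  then obtain f0 where f0: "T f0 = f0" using banach_fix_type[OF c] by blast
  have "G f0 v = f0 v" if "v \<in> E" for v
    using T_apply[of f0 v] closest_point_self[OF that] by (simp add: f0)
  then show ?thesis by (intro exI[of _ "apply_bcontfun f0"]) auto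
qed

lemma homeomorphism_map_prod:
  assumes f: "homeomorphism S T f f'" and g: "homeomorphism S' T' g g'"
  shows "homeomorphism (S \<times> S') (T \<times> T')
    (\<lambda>p. (f (fst p), g (snd p))) (\<lambda>p. (f' (fst p), g' (snd p)))"
proof -
  have "continuous_on (S \<times> S') (\<lambda>p. (f (fst p), g (snd p)))"
    using homeomorphism_cont1[OF f] homeomorphism_cont1[OF g]
    by (intro continuous_on_Pair continuous_on_compose2[OF _ continuous_on_fst]
        continuous_on_compose2[OF _ continuous_on_snd]) auto
  moreover have "continuous_on (T \<times> T') (\<lambda>p. (f' (fst p), g' (snd p)))"
    using homeomorphism_cont2[OF f] homeomorphism_cont2[OF g]
    by (intro continuous_on_Pair continuous_on_compose2[OF _ continuous_on_fst]
        continuous_on_compose2[OF _ continuous_on_snd]) auto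
  ultimately show ?thesis
    using f g unfolding homeomorphism_def by (force simp: image_iff)
qed

lemma attractor_image_subset:
  "is_attractor E N W A \<Longrightarrow> (i, j) \<in> N \<Longrightarrow> t \<in> A \<Longrightarrow> W i j t \<in> A"
  unfolding is_attractor_def by blast

lemma attractor_preimageE:
  assumes "is_attractor E N W A" "t \<in> A"
  obtains i j t' where "(i, j) \<in> N" "t' \<in> A" "t = W i j t'"
proof -
  have "t \<in> (\<Union>(i, j)\<in>N. W i j ` A)" using assms unfolding is_attractor_def by blast
  then show ?thesis using that by blast
qed

text \<open>The hypotheses of the theorem, weakened where the proof allows: \<open>s\<close>, \<open>g\<close>, \<open>h\<close> need only
  be continuous.\<close>

locale fractal_interpolation =
  fixes n m :: nat and x y :: "nat \<Rightarrow> real"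
    and Lx Ly :: "nat \<Rightarrow> real \<Rightarrow> real"
    and q r :: "nat \<Rightarrow> real \<times> real \<Rightarrow> real"
    and s g h :: "nat \<Rightarrow> nat \<Rightarrow> real \<times> real \<Rightarrow> real"
  assumes n: "n \<ge> 1" and m: "m \<ge> 1"
    and xinc: "\<And>i. i < n \<Longrightarrow> x i < x (Suc i)"
    and yinc: "\<And>j. j < m \<Longrightarrow> y j < y (Suc j)"
    and Lx_hom: "\<And>i. i \<in> {1..n} \<Longrightarrow>
        \<exists>L'. homeomorphism {x 0..x n} {x (i - 1)..x i} (Lx i) L'"
    and Lx_contr: "\<And>i. i \<in> {1..n} \<Longrightarrow> contraction_on {x 0..x n} (Lx i)"
    and Ly_hom: "\<And>j. j \<in> {1..m} \<Longrightarrow>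
        \<exists>L'. homeomorphism {y 0..y m} {y (j - 1)..y j} (Ly j) L'"
    and Ly_contr: "\<And>j. j \<in> {1..m} \<Longrightarrow> contraction_on {y 0..y m} (Ly j)"
    and s_cont: "\<And>i j. (i, j) \<in> {1..n} \<times> {1..m} \<Longrightarrow>
        continuous_on ({x (i - 1)..x i} \<times> {y (j - 1)..y j}) (s i j)"
    and s_bound: "\<And>i j v. (i, j) \<in> {1..n} \<times> {1..m} \<Longrightarrow>
        v \<in> {x (i - 1)..x i} \<times> {y (j - 1)..y j} \<Longrightarrow> \<bar>s i j v\<bar> < 1"
    and s_xbdry: "\<And>i j b. (i, j) \<in> {1..n} \<times> {1..m} \<Longrightarrow> b \<in> {y (j - 1)..y j} \<Longrightarrow>
        s i j (x (i - 1), b) = 0 \<and> s i j (x i, b) = 0"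
    and s_ybdry: "\<And>i j a. (i, j) \<in> {1..n} \<times> {1..m} \<Longrightarrow> a \<in> {x (i - 1)..x i} \<Longrightarrow>
        s i j (a, y (j - 1)) = 0 \<and> s i j (a, y j) = 0"
    and g_cont: "\<And>i j. (i, j) \<in> {1..n} \<times> {1..m} \<Longrightarrow>
        continuous_on ({x 0..x n} \<times> {y 0..y m}) (g i j)"
    and h_cont: "\<And>i j. (i, j) \<in> {1..n} \<times> {1..m} \<Longrightarrow>
        continuous_on ({x (i - 1)..x i} \<times> {y (j - 1)..y j}) (h i j)"
    and h_xbdry: "\<And>i j b. (i, j) \<in> {1..n} \<times> {1..m} \<Longrightarrow> b \<in> {y (j - 1)..y j} \<Longrightarrow>
        h i j (x (i - 1), b) = q (i - 1) (x (i - 1), b) \<and> h i j (x i, b) = q i (x i, b)"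
    and h_ybdry: "\<And>i j a. (i, j) \<in> {1..n} \<times> {1..m} \<Longrightarrow> a \<in> {x (i - 1)..x i} \<Longrightarrow>
        h i j (a, y (j - 1)) = r (j - 1) (a, y (j - 1)) \<and> h i j (a, y j) = r j (a, y j)"
begin

abbreviation "rect \<equiv> {x 0..x n} \<times> {y 0..y m}"
abbreviation "indices \<equiv> {1..n} \<times> {1..m}"
abbreviation "cell i j \<equiv> {x (i - 1)..x i} \<times> {y (j - 1)..y j}"
abbreviation "L \<equiv> Lmap Lx Ly"
abbreviation "W \<equiv> Wmap s g h Lx Ly"

lemma x_mono: "i \<le> i' \<Longrightarrow> i' \<le> n \<Longrightarrow> x i \<le> x i'"
  using increasing_steps_le[where u=x and k=n, OF xinc] .

lemma y_mono: "j \<le> j' \<Longrightarrow> j' \<le> m \<Longrightarrow> y j \<le> y j'"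
  using increasing_steps_le[where u=y and k=m, OF yinc] .

lemma rect_nonempty: "rect \<noteq> {}"
  using x_mono[of 0 n] y_mono[of 0 m] by auto

lemma cell_subset_rect: "(i, j) \<in> indices \<Longrightarrow> cell i j \<subseteq> rect"
proof -
  assume "(i, j) \<in> indices"
  then have "x 0 \<le> x (i - 1)" "x i \<le> x n" "y 0 \<le> y (j - 1)" "y j \<le> y m"
    by (auto intro: x_mono y_mono)
  then show ?thesis by auto
qed

lemma rect_cellE:
  assumes "v \<in> rect"
  obtains i j where "(i, j) \<in> indices" "v \<in> cell i j"
proof -
  obtain i where "i \<in> {1..n}" "fst v \<in> {x (i - 1)..x i}"
    using consecutive_intervals_cover[where u=x and k=n and a="fst v"] n assms
    by (auto simp: mem_Times_iff)
  moreover obtain j where "j \<in> {1..m}" "snd v \<in> {y (j - 1)..y j}"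
    using consecutive_intervals_cover[where u=y and k=m and a="snd v"] m assms
    by (auto simp: mem_Times_iff)
  ultimately show ?thesis using that by (auto simp: mem_Times_iff)
qed

lemma rect_eq_Union_cells: "rect = (\<Union>(i, j)\<in>indices. cell i j)"
proof
  show "rect \<subseteq> (\<Union>(i, j)\<in>indices. cell i j)"
  proof
    fix v assume "v \<in> rect"
    then obtain i j where "(i, j) \<in> indices" "v \<in> cell i j" by (rule rect_cellE)
    then show "v \<in> (\<Union>(i, j)\<in>indices. cell i j)" by blast
  qed
  show "(\<Union>(i, j)\<in>indices. cell i j) \<subseteq> rect" using cell_subset_rect by blast
qed

lemma cells_meet_x:
  assumes "(i, j) \<in> indices" "(i', j') \<in> indices" "i < i'" "v \<in> cell i j" "v \<in> cell i' j'"
  shows "fst v = x i \<and> i' = Suc i"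
  using consecutive_intervals_overlap[where u=x and k=n and a="fst v", OF xinc, of i i'] assms
  by (auto simp: mem_Times_iff)

lemma cells_meet_y:
  assumes "(i, j) \<in> indices" "(i', j') \<in> indices" "j < j'" "v \<in> cell i j" "v \<in> cell i' j'"
  shows "snd v = y j \<and> j' = Suc j"
  using consecutive_intervals_overlap[where u=y and k=m and a="snd v", OF yinc, of j j'] assms
  by (auto simp: mem_Times_iff)

definition Lx_inv :: "nat \<Rightarrow> real \<Rightarrow> real" where
  "Lx_inv i = (SOME L'. homeomorphism {x 0..x n} {x (i - 1)..x i} (Lx i) L')"

definition Ly_inv :: "nat \<Rightarrow> real \<Rightarrow> real" where
  "Ly_inv j = (SOME L'. homeomorphism {y 0..y m} {y (j - 1)..y j} (Ly j) L')"

abbreviation "L_inv \<equiv> Lmap Lx_inv Ly_inv"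

lemma homeomorphism_L: "(i, j) \<in> indices \<Longrightarrow> homeomorphism rect (cell i j) (L i j) (L_inv i j)"
proof -
  assume "(i, j) \<in> indices"
  then have i: "i \<in> {1..n}" and j: "j \<in> {1..m}" by auto
  have "homeomorphism {x 0..x n} {x (i - 1)..x i} (Lx i) (Lx_inv i)"
    using Lx_hom[OF i] unfolding Lx_inv_def by (rule someI_ex)
  moreover have "homeomorphism {y 0..y m} {y (j - 1)..y j} (Ly j) (Ly_inv j)"
    using Ly_hom[OF j] unfolding Ly_inv_def by (rule someI_ex)
  ultimately show ?thesis
    using homeomorphism_map_prod
    by (simp add: Lmap_def[abs_def])
qed

lemma L_in_cell: "(i, j) \<in> indices \<Longrightarrow> p \<in> rect \<Longrightarrow> L i j p \<in> cell i j"
  using homeomorphism_image1[OF homeomorphism_L] by blast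

lemma L_in_rect: "(i, j) \<in> indices \<Longrightarrow> p \<in> rect \<Longrightarrow> L i j p \<in> rect"
  using L_in_cell cell_subset_rect by blast

lemma L_contraction: "\<exists>C. 0 \<le> C \<and> C < 1 \<and> (\<forall>(i, j)\<in>indices. C-lipschitz_on rect (L i j))"
proof -
  have "\<exists>c<1. c-lipschitz_on rect (L i j)" if "(i, j) \<in> indices" for i j
  proof -
    have "i \<in> {1..n}" "j \<in> {1..m}" using that by auto
    then obtain cx cy where "cx < 1" "cx-lipschitz_on {x 0..x n} (Lx i)"
      and "cy < 1" "cy-lipschitz_on {y 0..y m} (Ly j)"
      using Lx_contr Ly_contr unfolding contraction_on_def by blast
    then have "max cx cy < 1" "(max cx cy)-lipschitz_on rect (\<lambda>p. (Lx i (fst p), Ly j (snd p)))"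
      by (auto intro!: lipschitz_on_map_prod intro: lipschitz_on_mono)
    then show ?thesis unfolding Lmap_def[abs_def] by (intro exI[of _ "max cx cy"]) simp
  qed
  then show ?thesis
    using finite_uniform_constant_less_one[of indices "\<lambda>(i, j) c. c-lipschitz_on rect (L i j)"]
      lipschitz_on_mono[OF _ order_refl] by fastforce
qed

text \<open>\<open>rb_piece f i j v\<close> is the height of \<open>W\<^sub>i\<^sub>j\<close> at the point of the graph of \<open>f\<close> lying
  above \<open>L\<^sub>i\<^sub>j\<^sup>-\<^sup>1 v\<close>.\<close>

definition rb_piece :: "(real \<times> real \<Rightarrow> real) \<Rightarrow> nat \<Rightarrow> nat \<Rightarrow> real \<times> real \<Rightarrow> real" where
  "rb_piece f i j v = s i j v * (f (L_inv i j v) - g i j (L_inv i j v)) + h i j v"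

lemma rb_piece_x_edges:
  assumes "(i, j) \<in> indices" "b \<in> {y (j - 1)..y j}"
  shows "rb_piece f i j (x (i - 1), b) = q (i - 1) (x (i - 1), b)"
    and "rb_piece f i j (x i, b) = q i (x i, b)"
  using s_xbdry[OF assms] h_xbdry[OF assms] unfolding rb_piece_def by simp_all

lemma rb_piece_y_edges:
  assumes "(i, j) \<in> indices" "a \<in> {x (i - 1)..x i}"
  shows "rb_piece f i j (a, y (j - 1)) = r (j - 1) (a, y (j - 1))"
    and "rb_piece f i j (a, y j) = r j (a, y j)"
  using s_ybdry[OF assms] h_ybdry[OF assms] unfolding rb_piece_def by simp_all

lemma rb_piece_agree_x:
  assumes "(i, j) \<in> indices" "(i', j') \<in> indices" "i < i'" "v \<in> cell i j" "v \<in> cell i' j'"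
  shows "rb_piece f i j v = rb_piece f i' j' v"
proof -
  obtain a b where v: "v = (a, b)" by (cases v)
  have "a = x i" "i' - 1 = i" using cells_meet_x[OF assms] v by auto
  then show ?thesis
    using rb_piece_x_edges(2)[OF assms(1), of b] rb_piece_x_edges(1)[OF assms(2), of b] assms(4,5) v
    by auto
qed

lemma rb_piece_agree_y:
  assumes "(i, j) \<in> indices" "(i, j') \<in> indices" "j < j'" "v \<in> cell i j" "v \<in> cell i j'"
  shows "rb_piece f i j v = rb_piece f i j' v"
proof -
  obtain a b where v: "v = (a, b)" by (cases v)
  have "b = y j" "j' - 1 = j" using cells_meet_y[OF assms] v by auto
  then show ?thesis
    using rb_piece_y_edges(2)[OF assms(1), of a] rb_piece_y_edges(1)[OF assms(2), of a] assms(4,5) v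
    by auto
qed

lemma rb_piece_agree:
  assumes ij: "(i, j) \<in> indices" "(i', j') \<in> indices" and v: "v \<in> cell i j" "v \<in> cell i' j'"
  shows "rb_piece f i j v = rb_piece f i' j' v"
proof (cases i i' rule: linorder_cases)
  case less
  from rb_piece_agree_x[OF ij less v] show ?thesis .
next
  case greater
  from rb_piece_agree_x[OF ij(2,1) greater v(2,1)] show ?thesis by simp
next
  case equal
  show ?thesis
  proof (cases j j' rule: linorder_cases)
    case less
    from rb_piece_agree_y[OF ij(1) _ less v(1)] ij(2) v(2) show ?thesis by (simp add: equal)
  next
    case greater
    from rb_piece_agree_y[OF ij(2) _ greater v(2)] ij(1) v(1) show ?thesis by (simp add: equal)
  next
    case equal
    then show ?thesis using \<open>i = i'\<close> by simp
  qed
qed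

definition rb_operator :: "(real \<times> real \<Rightarrow> real) \<Rightarrow> real \<times> real \<Rightarrow> real" where
  "rb_operator f v =
    (let c = SOME c. c \<in> indices \<and> v \<in> cell (fst c) (snd c) in rb_piece f (fst c) (snd c) v)"

lemma rb_operator_eq_piece: "(i, j) \<in> indices \<Longrightarrow> v \<in> cell i j \<Longrightarrow> rb_operator f v = rb_piece f i j v"
proof -
  assume ij: "(i, j) \<in> indices" "v \<in> cell i j"
  let ?c = "SOME c. c \<in> indices \<and> v \<in> cell (fst c) (snd c)"
  have "?c \<in> indices \<and> v \<in> cell (fst ?c) (snd ?c)"
    by (rule someI[of _ "(i, j)"]) (use ij in auto)
  then show ?thesis
    unfolding rb_operator_def Let_def using rb_piece_agree[of "fst ?c" "snd ?c" i j v f] ij by auto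
qed

lemma continuous_on_rb_piece:
  assumes "(i, j) \<in> indices" "continuous_on UNIV f"
  shows "continuous_on (cell i j) (rb_piece f i j)"
proof -
  have L_inv: "continuous_on (cell i j) (L_inv i j)" "L_inv i j ` cell i j \<subseteq> rect"
    using homeomorphism_L[OF assms(1)] by (auto simp: homeomorphism_def)
  have "continuous_on (cell i j) (\<lambda>v. f (L_inv i j v))"
    using continuous_on_compose2[OF assms(2) L_inv(1)] by simp
  moreover have "continuous_on (cell i j) (\<lambda>v. g i j (L_inv i j v))"
    using continuous_on_compose2[OF g_cont L_inv] assms(1) by auto
  ultimately show ?thesis
    unfolding rb_piece_def using s_cont h_cont assms(1) by (intro continuous_intros) auto
qed

lemma continuous_on_rb_operator:
  assumes f: "continuous_on UNIV f"
  shows "continuous_on rect (rb_operator f)"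
  unfolding rect_eq_Union_cells
proof (rule continuous_on_closed_Union)
  show "finite indices" by simp
  fix c assume "c \<in> indices"
  moreover obtain i j where c: "c = (i, j)" by (cases c)
  ultimately have ij: "(i, j) \<in> indices" by simp
  show "closed (case c of (i, j) \<Rightarrow> cell i j)" unfolding c by (simp add: closed_Times)
  have "continuous_on (cell i j) (rb_piece f i j)" by (rule continuous_on_rb_piece[OF ij f])
  then show "continuous_on (case c of (i, j) \<Rightarrow> cell i j) (rb_operator f)"
    unfolding c prod.case by (rule continuous_on_eq) (simp add: rb_operator_eq_piece[OF ij])
qed

lemma s_uniform_bound: "\<exists>c. 0 \<le> c \<and> c < 1 \<and> (\<forall>(i, j)\<in>indices. \<forall>v\<in>cell i j. \<bar>s i j v\<bar> \<le> c)"
proof (rule finite_uniform_constant_less_one)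
  fix c assume "c \<in> indices"
  moreover obtain i j where c: "c = (i, j)" by (cases c)
  ultimately have ij: "(i, j) \<in> indices" by simp
  have "compact (cell i j)" by (intro compact_Times compact_Icc)
  from compact_abs_bound_less_one[OF this s_cont[OF ij] s_bound[OF ij]]
  show "\<exists>b<1. case c of (i, j) \<Rightarrow> \<forall>v\<in>cell i j. \<bar>s i j v\<bar> \<le> b" unfolding c by simp
next
  fix c b b' assume "case c of (i, j) \<Rightarrow> \<forall>v\<in>cell i j. \<bar>s i j v\<bar> \<le> b" "b \<le> b'"
  then show "case c of (i, j) \<Rightarrow> \<forall>v\<in>cell i j. \<bar>s i j v\<bar> \<le> b'"
    by (cases c) (simp, meson order_trans)
qed simp

lemma rb_operator_fixed_point: "\<exists>F. continuous_on UNIV F \<and> (\<forall>v\<in>rect. rb_operator F v = F v)"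
proof -
  obtain c where c: "0 \<le> c" "c < 1"
    and s_le: "\<forall>(i, j)\<in>indices. \<forall>v\<in>cell i j. \<bar>s i j v\<bar> \<le> c"
    using s_uniform_bound by blast
  have "\<exists>w. dist (rb_operator f v) (rb_operator f' v) \<le> c * dist (f w) (f' w)"
    if "v \<in> rect" for f f' v
  proof -
    obtain i j where ij: "(i, j) \<in> indices" "v \<in> cell i j" using \<open>v \<in> rect\<close> by (rule rect_cellE)
    let ?w = "L_inv i j v"
    have "dist (rb_operator f v) (rb_operator f' v) = \<bar>s i j v\<bar> * dist (f ?w) (f' ?w)"
      unfolding rb_operator_eq_piece[OF ij] rb_piece_def dist_real_def
      by (simp add: abs_mult right_diff_distrib[symmetric])
    also have "\<dots> \<le> c * dist (f ?w) (f' ?w)" using s_le ij by (intro mult_right_mono) auto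
    finally show ?thesis by blast
  qed
  moreover have "compact rect" by (intro compact_Times compact_Icc)
  moreover have "convex rect" by (intro convex_Times convex_real_interval)
  ultimately show ?thesis
    using continuous_fixed_point_of_contraction
      [where G=rb_operator, OF _ _ rect_nonempty continuous_on_rb_operator _ c]
    by blast
qed

context
  fixes F :: "real \<times> real \<Rightarrow> real"
  assumes F_cont: "continuous_on UNIV F" and F_fixed: "\<forall>v\<in>rect. rb_operator F v = F v"
begin

lemma F_functional_equation:
  assumes ij: "(i, j) \<in> indices" and p: "p \<in> rect"
  shows "F (L i j p) = s i j (L i j p) * (F p - g i j p) + h i j (L i j p)"
proof -
  have hom: "homeomorphism rect (cell i j) (L i j) (L_inv i j)" by (rule homeomorphism_L[OF ij])
  have c: "L i j p \<in> cell i j" by (rule L_in_cell[OF ij p])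
  have "F (L i j p) = rb_operator F (L i j p)" using F_fixed cell_subset_rect[OF ij] c by auto
  also have "\<dots> = rb_piece F i j (L i j p)" by (rule rb_operator_eq_piece[OF ij c])
  finally show ?thesis unfolding rb_piece_def homeomorphism_apply1[OF hom p] .
qed

lemma W_deviation:
  assumes ij: "(i, j) \<in> indices" and p: "(a, b) \<in> rect"
  shows "W i j (a, b, c) =
    (Lx i a, Ly j b, F (Lx i a, Ly j b) + s i j (Lx i a, Ly j b) * (c - F (a, b)))"
  using F_functional_equation[OF assms]
  by (simp add: Wmap_def Fmap_def Qmap_def Lmap_def algebra_simps)

lemma graph_of_eq_image: "graph_of rect F = (\<lambda>p. (fst p, snd p, F p)) ` rect"
  unfolding graph_of_def by force

lemma graph_is_attractor: "is_attractor rect indices W (graph_of rect F)"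
  unfolding is_attractor_def
proof (intro conjI)
  show "graph_of rect F \<noteq> {}" unfolding graph_of_eq_image using rect_nonempty by simp
  have "continuous_on rect (\<lambda>p. (fst p, snd p, F p))"
    using F_cont by (intro continuous_intros) (auto intro: continuous_on_subset)
  then show "compact (graph_of rect F)" unfolding graph_of_eq_image
    by (intro compact_continuous_image compact_Times compact_Icc)
  show "graph_of rect F \<subseteq> {(a, b, c). (a, b) \<in> rect}" unfolding graph_of_def by auto
  show "graph_of rect F = (\<Union>(i, j)\<in>indices. W i j ` graph_of rect F)"
  proof
    show "graph_of rect F \<subseteq> (\<Union>(i, j)\<in>indices. W i j ` graph_of rect F)"
    proof
      fix t assume "t \<in> graph_of rect F"
      then obtain v where t: "t = (fst v, snd v, F v)" and v: "v \<in> rect"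
        unfolding graph_of_eq_image by blast
      obtain i j where ij: "(i, j) \<in> indices" "v \<in> cell i j" using v by (rule rect_cellE)
      have hom: "homeomorphism rect (cell i j) (L i j) (L_inv i j)"
        by (rule homeomorphism_L[OF ij(1)])
      define p where "p = L_inv i j v"
      have p: "p \<in> rect" "L i j p = v"
        unfolding p_def using homeomorphism_image2[OF hom] homeomorphism_apply2[OF hom ij(2)] ij(2)
        by auto
      have "W i j (fst p, snd p, F p) = t"
        using W_deviation[OF ij(1), of "fst p" "snd p" "F p"] p t by (auto simp: Lmap_def)
      moreover have "(fst p, snd p, F p) \<in> graph_of rect F"
        unfolding graph_of_eq_image using p by auto
      ultimately show "t \<in> (\<Union>(i, j)\<in>indices. W i j ` graph_of rect F)" using ij(1) by force
    qed
    show "(\<Union>(i, j)\<in>indices. W i j ` graph_of rect F) \<subseteq> graph_of rect F"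
    proof
      fix t assume "t \<in> (\<Union>(i, j)\<in>indices. W i j ` graph_of rect F)"
      then obtain i j a b where ij: "(i, j) \<in> indices" and ab: "(a, b) \<in> rect"
        and t: "t = W i j (a, b, F (a, b))"
        unfolding graph_of_def by blast
      have "t = (Lx i a, Ly j b, F (Lx i a, Ly j b))" using W_deviation[OF ij ab] t by simp
      moreover have "(Lx i a, Ly j b) \<in> rect"
        using L_in_rect[OF ij ab] unfolding Lmap_def by simp
      ultimately show "t \<in> graph_of rect F" unfolding graph_of_def by blast
    qed
  qed
qed

lemma attractor_on_graph:
  assumes A: "is_attractor rect indices W A" and t: "t \<in> A"
  shows "snd (snd t) = F (fst t, fst (snd t))"
proof -
  obtain c where c: "0 \<le> c" "c < 1"
    and s_le: "\<forall>(i, j)\<in>indices. \<forall>v\<in>cell i j. \<bar>s i j v\<bar> \<le> c"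
    using s_uniform_bound by blast
  define \<phi> where "\<phi> t = \<bar>snd (snd t) - F (fst t, fst (snd t))\<bar>" for t :: "real \<times> real \<times> real"
  have "continuous_on A \<phi>"
    unfolding \<phi>_def by (intro continuous_intros continuous_on_compose2[OF F_cont]) auto
  moreover have "\<exists>t'\<in>A. \<phi> t \<le> c * \<phi> t'" if "t \<in> A" for t
  proof -
    obtain i j a b z where ij: "(i, j) \<in> indices" and A': "(a, b, z) \<in> A"
      and t: "t = W i j (a, b, z)"
      using attractor_preimageE[OF A \<open>t \<in> A\<close>] by (metis prod_cases3)
    have ab: "(a, b) \<in> rect" using A A' unfolding is_attractor_def by blast
    have "\<phi> t = \<bar>s i j (Lx i a, Ly j b)\<bar> * \<phi> (a, b, z)"
      unfolding t W_deviation[OF ij ab] \<phi>_def by (simp add: abs_mult)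
    also have "\<dots> \<le> c * \<phi> (a, b, z)"
      using s_le ij L_in_cell[OF ij ab] by (intro mult_right_mono) (auto simp: \<phi>_def Lmap_def)
    finally show ?thesis using A' by blast
  qed
  moreover have "compact A" using A unfolding is_attractor_def by blast
  ultimately have "\<forall>t\<in>A. \<phi> t \<le> 0" using compact_dominated_by_contraction_nonpos c by blast
  then show ?thesis using t unfolding \<phi>_def by force
qed

lemma rect_subset_attractor_shadow:
  assumes A: "is_attractor rect indices W A"
  shows "rect \<subseteq> (\<lambda>t. (fst t, fst (snd t))) ` A"
proof -
  define K where "K = (\<lambda>t. (fst t, fst (snd t))) ` A"
  have "compact K" unfolding K_def using A unfolding is_attractor_def
    by (intro compact_continuous_image continuous_intros) auto
  then have K: "closed K" "K \<noteq> {}"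
    using A unfolding K_def is_attractor_def by (auto intro: compact_imp_closed)
  have K_rect: "K \<subseteq> rect" unfolding K_def using A unfolding is_attractor_def by auto
  have L_K: "L i j k \<in> K" if "(i, j) \<in> indices" "k \<in> K" for i j k
  proof -
    obtain t where "t \<in> A" "k = (fst t, fst (snd t))" using \<open>k \<in> K\<close> unfolding K_def by blast
    moreover have "W i j t \<in> A" using attractor_image_subset[OF A that(1) \<open>t \<in> A\<close>] .
    ultimately show ?thesis unfolding K_def by (force simp: Wmap_def Lmap_def)
  qed
  obtain C where C: "0 \<le> C" "C < 1" "\<forall>(i, j)\<in>indices. C-lipschitz_on rect (L i j)"
    using L_contraction by blast
  have "\<exists>p'\<in>rect. infdist p K \<le> C * infdist p' K" if p: "p \<in> rect" for p
  proof -
    obtain i j where ij: "(i, j) \<in> indices" "p \<in> cell i j" using p by (rule rect_cellE)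
    have hom: "homeomorphism rect (cell i j) (L i j) (L_inv i j)"
      by (rule homeomorphism_L[OF ij(1)])
    define p' where "p' = L_inv i j p"
    have p': "p' \<in> rect" "L i j p' = p"
      unfolding p'_def using homeomorphism_image2[OF hom] homeomorphism_apply2[OF hom ij(2)] ij(2)
      by auto
    obtain k where k: "k \<in> K" "infdist p' K = dist p' k" using infdist_attains_inf[OF K] by blast
    have "infdist p K \<le> dist p (L i j k)" using L_K[OF ij(1) k(1)] by (rule infdist_le)
    also have "\<dots> \<le> C * dist p' k"
    proof -
      have "C-lipschitz_on rect (L i j)" using C(3) ij(1) by blast
      from lipschitz_onD[OF this p'(1), of k] show ?thesis using p'(2) K_rect k(1) by auto
    qed
    finally show ?thesis using p'(1) unfolding k(2)[symmetric] by blast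
  qed
  moreover have "continuous_on rect (\<lambda>p. infdist p K)" by (intro continuous_intros)
  moreover have "compact rect" by (intro compact_Times compact_Icc)
  ultimately have "\<forall>p\<in>rect. infdist p K \<le> 0"
    by (intro compact_dominated_by_contraction_nonpos[OF _ _ C(1,2)])
  then have "rect \<subseteq> K"
    using in_closed_iff_infdist_zero[OF K] infdist_nonneg by (meson antisym subsetI)
  then show ?thesis unfolding K_def .
qed

lemma attractor_eq_graph:
  assumes A: "is_attractor rect indices W A"
  shows "A = graph_of rect F"
proof
  show "A \<subseteq> graph_of rect F"
  proof
    fix t assume t: "t \<in> A"
    obtain a b c where abc: "t = (a, b, c)" by (cases t)
    have "(a, b) \<in> rect" using A t abc unfolding is_attractor_def by blast
    moreover have "c = F (a, b)" using attractor_on_graph[OF A t] abc by simp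
    ultimately show "t \<in> graph_of rect F" unfolding graph_of_def abc by blast
  qed
  show "graph_of rect F \<subseteq> A"
  proof
    fix t assume "t \<in> graph_of rect F"
    then obtain a b where t: "t = (a, b, F (a, b))" and ab: "(a, b) \<in> rect"
      unfolding graph_of_def by blast
    obtain c where c: "(a, b, c) \<in> A"
      using rect_subset_attractor_shadow[OF A] ab by force
    have "c = F (a, b)" using attractor_on_graph[OF A c] by simp
    then show "t \<in> A" using c t by simp
  qed
qed

end

lemma continuous_graph_is_unique_attractor:
  "\<exists>f. continuous_on rect f \<and> is_attractor rect indices W (graph_of rect f)
     \<and> (\<forall>A. is_attractor rect indices W A \<longrightarrow> A = graph_of rect f)"
proof -
  obtain F where F: "continuous_on UNIV F" "\<forall>v\<in>rect. rb_operator F v = F v"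
    using rb_operator_fixed_point by blast
  have "continuous_on rect F" using F(1) by (rule continuous_on_subset) simp
  then show ?thesis using graph_is_attractor[OF F] attractor_eq_graph[OF F] by blast
qed

end

theorem theorem1:
  fixes n m :: nat and x y :: "nat \<Rightarrow> real" and z :: "nat \<Rightarrow> nat \<Rightarrow> real"
    and Lx Ly :: "nat \<Rightarrow> real \<Rightarrow> real"
    and q r :: "nat \<Rightarrow> real \<times> real \<Rightarrow> real"
    and s g h :: "nat \<Rightarrow> nat \<Rightarrow> real \<times> real \<Rightarrow> real"
  assumes n: "n \<ge> 1" and m: "m \<ge> 1"
    and xinc: "\<And>i. i < n \<Longrightarrow> x i < x (Suc i)"
    and yinc: "\<And>j. j < m \<Longrightarrow> y j < y (Suc j)"
    and Lx_hom: "\<And>i. i \<in> {1..n} \<Longrightarrow>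
        (\<exists>L'. homeomorphism {x 0..x n} {x (i - 1)..x i} (Lx i) L')"
    and Lx_contr: "\<And>i. i \<in> {1..n} \<Longrightarrow> contraction_on {x 0..x n} (Lx i)"
    and Lx_end: "\<And>i. i \<in> {1..n} \<Longrightarrow> Lx i ` {x 0, x n} = {x (i - 1), x i}"
    and Ly_hom: "\<And>j. j \<in> {1..m} \<Longrightarrow>
        (\<exists>L'. homeomorphism {y 0..y m} {y (j - 1)..y j} (Ly j) L')"
    and Ly_contr: "\<And>j. j \<in> {1..m} \<Longrightarrow> contraction_on {y 0..y m} (Ly j)"
    and Ly_end: "\<And>j. j \<in> {1..m} \<Longrightarrow> Ly j ` {y 0, y m} = {y (j - 1), y j}"
    and q_cont: "\<And>a. a \<le> n \<Longrightarrow> continuous_on ({x a} \<times> {y 0..y m}) (q a)"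
    and q_val: "\<And>a l. a \<le> n \<Longrightarrow> l \<le> m \<Longrightarrow> q a (x a, y l) = z a l"
    and r_cont: "\<And>b. b \<le> m \<Longrightarrow> continuous_on ({x 0..x n} \<times> {y b}) (r b)"
    and r_val: "\<And>b k. b \<le> m \<Longrightarrow> k \<le> n \<Longrightarrow> r b (x k, y b) = z k b"
    and s_lip: "\<And>i j. (i, j) \<in> {1..n} \<times> {1..m} \<Longrightarrow>
        \<exists>C. C-lipschitz_on ({x (i - 1)..x i} \<times> {y (j - 1)..y j}) (s i j)"
    and s_bound: "\<And>i j a b. (i, j) \<in> {1..n} \<times> {1..m} \<Longrightarrow>
        (a, b) \<in> {x (i - 1)..x i} \<times> {y (j - 1)..y j} \<Longrightarrow> \<bar>s i j (a, b)\<bar> < 1"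
    and s_xbdry: "\<And>i j b. (i, j) \<in> {1..n} \<times> {1..m} \<Longrightarrow> b \<in> {y (j - 1)..y j} \<Longrightarrow>
        s i j (x (i - 1), b) = 0 \<and> s i j (x i, b) = 0"
    and s_ybdry: "\<And>i j a. (i, j) \<in> {1..n} \<times> {1..m} \<Longrightarrow> a \<in> {x (i - 1)..x i} \<Longrightarrow>
        s i j (a, y (j - 1)) = 0 \<and> s i j (a, y j) = 0"
    and g_lip: "\<And>i j. (i, j) \<in> {1..n} \<times> {1..m} \<Longrightarrow>
        \<exists>C. C-lipschitz_on ({x 0..x n} \<times> {y 0..y m}) (g i j)"
    and h_lip: "\<And>i j. (i, j) \<in> {1..n} \<times> {1..m} \<Longrightarrow>
        \<exists>C. C-lipschitz_on ({x (i - 1)..x i} \<times> {y (j - 1)..y j}) (h i j)"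
    and h_xbdry: "\<And>i j b. (i, j) \<in> {1..n} \<times> {1..m} \<Longrightarrow> b \<in> {y (j - 1)..y j} \<Longrightarrow>
        h i j (x (i - 1), b) = q (i - 1) (x (i - 1), b) \<and> h i j (x i, b) = q i (x i, b)"
    and h_ybdry: "\<And>i j a. (i, j) \<in> {1..n} \<times> {1..m} \<Longrightarrow> a \<in> {x (i - 1)..x i} \<Longrightarrow>
        h i j (a, y (j - 1)) = r (j - 1) (a, y (j - 1)) \<and> h i j (a, y j) = r j (a, y j)"
  shows "\<exists>f. continuous_on ({x 0..x n} \<times> {y 0..y m}) f
     \<and> is_attractor ({x 0..x n} \<times> {y 0..y m}) ({1..n} \<times> {1..m}) (Wmap s g h Lx Ly)
          (graph_of ({x 0..x n} \<times> {y 0..y m}) f)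
     \<and> (\<forall>A. is_attractor ({x 0..x n} \<times> {y 0..y m}) ({1..n} \<times> {1..m}) (Wmap s g h Lx Ly) A
          \<longrightarrow> A = graph_of ({x 0..x n} \<times> {y 0..y m}) f)"
proof -
  have lipschitz_continuous: "continuous_on S f" if "\<exists>C. C-lipschitz_on S f"
    for S and f :: "real \<times> real \<Rightarrow> real"
    using that lipschitz_on_continuous_on by blast
  interpret fractal_interpolation n m x y Lx Ly q r s g h
    by unfold_locales (use assms lipschitz_continuous in \<open>auto simp del: atLeastAtMost_iff\<close>)
  show ?thesis by (rule continuous_graph_is_unique_attractor)
qed

end
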